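(* Let $f:\mathbb{S}^D\to\mathbb{R}$ be differentiable everywhere, and let $z\in\mathbb{S}^D$ satisfy $\inf_{y\in\mathbb{S}^D}\{f(y)-y\cdot z\}>-\infty$. Then for every $\varepsilon>0$ there is $y_\varepsilon\in\mathbb{S}^D$ such that $\inf_{y\in\mathbb{S}^D}\big\{f(y)+\varepsilon\sqrt{1+|y|^2}-y\cdot z\big\}=f(y_\varepsilon)+\varepsilon\sqrt{1+|y_\varepsilon|^2}-y_\varepsilon\cdot z$ and $|z-\nabla f(y_\varepsilon)|\le\varepsilon$. Moreover, $\lim_{\varepsilon\to0}\inf_{y\in\mathbb{S}^D}\big\{f(y)+\varepsilon\sqrt{1+|y|^2}-y\cdot z\big\}=\inf_{y\in\mathbb{S}^D}\{f(y)-y\cdot z\}$.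
   Context: $\mathbb{S}^D$ is the space of real symmetric $D\times D$ matrices, equipped with the entrywise inner product $a\cdot b=\sum_{i,j}a_{ij}b_{ij}$ and norm $|a|=\sqrt{a\cdot a}$; $\nabla f$ denotes the gradient of $f$ on $\mathbb{S}^D$ with respect to this inner product. *)

theory Defs
  imports "HOL-Analysis.Analysis"
begin

text \<open>The space of real symmetric D x D matrices, as a subspace of real^'n^'n.
  The inner product on real^'n^'n is the entrywise one, and norm is the Frobenius norm.\<close>
definition sym_mats :: "(real^'n^'n) set" where
  "sym_mats = {A. transpose A = A}"

definition sym_grad :: "(real^'n^'n \<Rightarrow> real) \<Rightarrow> real^'n^'n \<Rightarrow> real^'n^'n" where
  "sym_grad f y = (THE g. g \<in> sym_mats \<and> (f has_derivative (\<lambda>h. g \<bullet> h)) (at y within sym_mats))"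

end

theory Submission
  imports Defs
begin

text \<open>Adding the coercive penalty \<open>\<epsilon> \<surd>(1 + |y|\<^sup>2)\<close> to the function \<open>y \<mapsto> f y - y \<bullet> z\<close>, which is
  bounded below, makes its sublevel sets bounded, so on the closed subspace of symmetric matrices
  it attains its infimum at some \<open>y\<^sub>\<epsilon>\<close>. The first-order condition there along symmetric directions
  identifies the gradient: \<open>\<nabla>f(y\<^sub>\<epsilon>) = z - \<epsilon> y\<^sub>\<epsilon> / \<surd>(1 + |y\<^sub>\<epsilon>|\<^sup>2)\<close>, which lies within \<open>\<epsilon>\<close> of \<open>z\<close>.
  The penalised infima lie above the unpenalised one and decrease to it as \<open>\<epsilon> \<rightarrow> 0\<close>, since any
  fixed competitor \<open>y\<close> costs only \<open>\<epsilon> \<surd>(1 + |y|\<^sup>2)\<close> extra.\<close>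

lemma transpose_add: "transpose (A + B) = transpose A + transpose B"
  by (simp add: transpose_def vec_eq_iff)

lemma transpose_zero: "transpose 0 = 0"
  by (simp add: transpose_def vec_eq_iff)

lemma subspace_sym_mats: "subspace sym_mats"
  unfolding subspace_def sym_mats_def by (simp add: transpose_add transpose_zero transpose_scalar)

lemma closed_sym_mats: "closed sym_mats"
  by (rule closed_subspace[OF subspace_sym_mats])

lemma has_derivative_within_subspace_line:
  assumes "(f has_derivative L) (at y within S)" "subspace S" "y \<in> S" "h \<in> S"
  shows "((\<lambda>t. f (y + t *\<^sub>R h)) has_real_derivative L h) (at 0)"
proof -
  have line: "((\<lambda>t. y + t *\<^sub>R h) has_derivative (\<lambda>t. t *\<^sub>R h)) (at 0)"
    by (auto intro!: derivative_eq_intros)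
  have "range (\<lambda>t. y + t *\<^sub>R h) \<subseteq> S"
    using assms(2-4) by (auto intro: subspace_add subspace_scale)
  then have "(f has_derivative L) (at ((\<lambda>t. y + t *\<^sub>R h) 0) within range (\<lambda>t. y + t *\<^sub>R h))"
    using has_derivative_subset[OF assms(1)] by simp
  from diff_chain_within[OF line this]
  have "((\<lambda>t. f (y + t *\<^sub>R h)) has_derivative (\<lambda>t. L (t *\<^sub>R h))) (at 0)"
    by (simp add: comp_def)
  moreover have "(\<lambda>t. L (t *\<^sub>R h)) = (*) (L h)"
    using has_derivative_bounded_linear[OF assms(1)]
    by (auto simp: bounded_linear.linear linear_scale)
  ultimately show ?thesis by (simp add: has_field_derivative_def)
qed

lemma has_derivative_within_subspace_unique:
  fixes f :: "'a::real_normed_vector \<Rightarrow> real"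
  assumes "(f has_derivative L1) (at y within S)" "(f has_derivative L2) (at y within S)"
    and "subspace S" "y \<in> S" "h \<in> S"
  shows "L1 h = L2 h"
  using assms by (metis DERIV_unique has_derivative_within_subspace_line)

lemma has_derivative_within_subspace_cong:
  assumes "(f has_derivative L1) (at y within S)" "bounded_linear L2"
    and "\<And>h. h \<in> S \<Longrightarrow> L1 h = L2 h" "subspace S" "y \<in> S"
  shows "(f has_derivative L2) (at y within S)"
proof -
  have "((\<lambda>x. norm (f x - f y - L1 (x - y)) / norm (x - y)) \<longlongrightarrow> 0) (at y within S)"
    using assms(1) by (simp add: has_derivative_iff_norm)
  moreover have "\<forall>\<^sub>F x in at y within S.
      norm (f x - f y - L1 (x - y)) / norm (x - y) = norm (f x - f y - L2 (x - y)) / norm (x - y)"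
    unfolding eventually_at_filter
    using assms(3-5) by (intro always_eventually) (metis subspace_diff)
  ultimately have "((\<lambda>x. norm (f x - f y - L2 (x - y)) / norm (x - y)) \<longlongrightarrow> 0) (at y within S)"
    by (rule Lim_transform_eventually)
  then show ?thesis using assms(2) by (simp add: has_derivative_iff_norm)
qed

lemma has_derivative_within_subspace_min:
  fixes F :: "'a::real_normed_vector \<Rightarrow> real"
  assumes "(F has_derivative L) (at y within S)" "subspace S" "y \<in> S" "h \<in> S"
    and "\<And>x. x \<in> S \<Longrightarrow> F y \<le> F x"
  shows "L h = 0"
proof (rule DERIV_local_min)
  show "((\<lambda>t. F (y + t *\<^sub>R h)) has_real_derivative L h) (at 0)"
    using assms(1-4) by (rule has_derivative_within_subspace_line)
  show "\<forall>t. \<bar>0 - t\<bar> < 1 \<longrightarrow> F (y + 0 *\<^sub>R h) \<le> F (y + t *\<^sub>R h)"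
    using assms(2-5) by (auto intro!: subspace_add subspace_scale)
qed simp

lemma sym_grad_eqI:
  assumes "(f has_derivative L) (at y within sym_mats)" "y \<in> sym_mats" "G \<in> sym_mats"
    and "\<And>h. h \<in> sym_mats \<Longrightarrow> L h = G \<bullet> h"
  shows "sym_grad f y = G"
  unfolding sym_grad_def
proof (rule the_equality)
  have G_deriv: "(f has_derivative (\<lambda>h. G \<bullet> h)) (at y within sym_mats)"
    using assms subspace_sym_mats
    by (intro has_derivative_within_subspace_cong[OF assms(1)] bounded_linear_inner_right)
  then show "G \<in> sym_mats \<and> (f has_derivative (\<lambda>h. G \<bullet> h)) (at y within sym_mats)"
    using assms(3) by simp
  fix G' assume G': "G' \<in> sym_mats \<and> (f has_derivative (\<lambda>h. G' \<bullet> h)) (at y within sym_mats)"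
  then have "G' - G \<in> sym_mats"
    using assms(3) subspace_sym_mats subspace_diff by blast
  then have "G' \<bullet> (G' - G) = G \<bullet> (G' - G)"
    using G' G_deriv assms(2) subspace_sym_mats by (blast intro: has_derivative_within_subspace_unique)
  then have "(G' - G) \<bullet> (G' - G) = 0" by (simp add: inner_diff_left)
  then show "G' = G" by simp
qed

lemma has_derivative_sqrt_one_plus_norm_sq:
  fixes y :: "'a::real_inner"
  shows "((\<lambda>x. sqrt (1 + (norm x)\<^sup>2)) has_derivative (\<lambda>h. (y \<bullet> h) / sqrt (1 + (norm y)\<^sup>2))) (at y)"
proof -
  have "((\<lambda>x. sqrt (1 + x \<bullet> x)) has_derivative
      (\<lambda>h. inverse (sqrt (1 + y \<bullet> y)) / 2 * (h \<bullet> y + y \<bullet> h))) (at y)"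
    by (auto intro!: derivative_eq_intros simp: add_pos_nonneg)
  then show ?thesis
    by (simp add: power2_norm_eq_inner inner_commute field_simps)
qed

lemma norm_le_sqrt_one_plus_norm_sq: "norm y \<le> sqrt (1 + (norm y)\<^sup>2)"
  by (rule real_le_rsqrt) simp

lemma continuous_attains_inf_coercive:
  fixes F :: "'a::{real_normed_vector, heine_borel} \<Rightarrow> real"
  assumes "closed S" "S \<noteq> {}" "continuous_on S F" "e > 0"
    and coercive: "\<And>y. y \<in> S \<Longrightarrow> m + e * norm y \<le> F y"
  shows "\<exists>y\<in>S. \<forall>x\<in>S. F y \<le> F x"
proof -
  obtain a where a: "a \<in> S" using assms(2) by blast
  define K where "K = S \<inter> F -` {..F a}"
  have "compact K"
  proof (rule compact_eq_bounded_closed[THEN iffD2], rule conjI)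
    have "K \<subseteq> cball 0 ((F a - m) / e)"
      using \<open>e > 0\<close> by (auto simp: K_def field_simps dest!: coercive)
    then show "bounded K" by (rule bounded_subset[OF bounded_cball])
    show "closed K"
      unfolding K_def by (rule continuous_closed_preimage[OF assms(3,1)]) simp
  qed
  moreover have "K \<noteq> {}" "continuous_on K F"
    using a assms(3) by (auto simp: K_def intro: continuous_on_subset)
  ultimately obtain y where "y \<in> K" "\<forall>x\<in>K. F y \<le> F x"
    using continuous_attains_inf by blast
  then show ?thesis
    unfolding K_def by (metis IntD1 IntI a atMost_iff le_cases order.trans vimageI)
qed

lemma penalized_min_derivative:
  fixes f :: "'a::real_inner \<Rightarrow> real"
  assumes "(f has_derivative L) (at y within S)" "subspace S" "y \<in> S" "h \<in> S"
    and "\<And>x. x \<in> S \<Longrightarrow>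
      f y + \<epsilon> * sqrt (1 + (norm y)\<^sup>2) - y \<bullet> z \<le> f x + \<epsilon> * sqrt (1 + (norm x)\<^sup>2) - x \<bullet> z"
  shows "L h = (z - (\<epsilon> / sqrt (1 + (norm y)\<^sup>2)) *\<^sub>R y) \<bullet> h"
proof -
  have "((\<lambda>x. f x + \<epsilon> * sqrt (1 + (norm x)\<^sup>2) - x \<bullet> z) has_derivative
      (\<lambda>h. L h + \<epsilon> * ((y \<bullet> h) / sqrt (1 + (norm y)\<^sup>2)) - h \<bullet> z)) (at y within S)"
    using has_derivative_subset[OF has_derivative_sqrt_one_plus_norm_sq subset_UNIV, of y S]
    by (intro has_derivative_diff has_derivative_add assms(1) has_derivative_mult_right
        has_derivative_inner_left has_derivative_ident)
  from has_derivative_within_subspace_min[OF this assms(2-4)] assms(5)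
  have "L h + \<epsilon> * ((y \<bullet> h) / sqrt (1 + (norm y)\<^sup>2)) - h \<bullet> z = 0" by blast
  then show ?thesis by (simp add: inner_diff_left inner_commute algebra_simps)
qed

lemma norm_sub_sym_grad_at_penalized_min:
  assumes "f differentiable (at y within sym_mats)" "y \<in> sym_mats" "z \<in> sym_mats" "\<epsilon> \<ge> 0"
    and "\<And>x. x \<in> sym_mats \<Longrightarrow>
      f y + \<epsilon> * sqrt (1 + (norm y)\<^sup>2) - y \<bullet> z \<le> f x + \<epsilon> * sqrt (1 + (norm x)\<^sup>2) - x \<bullet> z"
  shows "norm (z - sym_grad f y) \<le> \<epsilon>"
proof -
  define s where "s = sqrt (1 + (norm y)\<^sup>2)"
  have "s > 0" by (simp add: s_def add_pos_nonneg)
  obtain L where L: "(f has_derivative L) (at y within sym_mats)"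
    using assms(1) by (auto simp: differentiable_def)
  have "sym_grad f y = z - (\<epsilon> / s) *\<^sub>R y"
  proof (rule sym_grad_eqI[OF L assms(2)])
    show "z - (\<epsilon> / s) *\<^sub>R y \<in> sym_mats"
      using assms(2,3) subspace_sym_mats by (metis subspace_diff subspace_scale)
    show "L h = (z - (\<epsilon> / s) *\<^sub>R y) \<bullet> h" if "h \<in> sym_mats" for h
      unfolding s_def using L subspace_sym_mats assms(2) that assms(5)
      by (rule penalized_min_derivative)
  qed
  then have "norm (z - sym_grad f y) = \<epsilon> / s * norm y"
    using \<open>s > 0\<close> assms(4) by simp
  also have "\<dots> \<le> \<epsilon>"
    using norm_le_sqrt_one_plus_norm_sq[of y] \<open>s > 0\<close> assms(4)
    by (simp add: s_def field_simps mult_left_mono)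
  finally show ?thesis .
qed

lemma tendsto_INF_penalty:
  fixes g p :: "'a \<Rightarrow> real"
  assumes "S \<noteq> {}" "bdd_below (g ` S)" "\<And>y. y \<in> S \<Longrightarrow> 0 \<le> p y"
  shows "((\<lambda>e. INF y\<in>S. g y + e * p y) \<longlongrightarrow> (INF y\<in>S. g y)) (at_right 0)"
proof (rule order_tendstoI)
  fix a
  assume a: "a < (INF y\<in>S. g y)"
  show "\<forall>\<^sub>F e in at_right 0. a < (INF y\<in>S. g y + e * p y)"
  proof (rule eventually_mono[OF eventually_at_right_less])
    fix e :: real
    assume "0 < e"
    have "(INF y\<in>S. g y) \<le> (INF y\<in>S. g y + e * p y)"
    proof (rule cINF_greatest[OF assms(1)])
      fix y
      assume "y \<in> S"
      then have "(INF y\<in>S. g y) \<le> g y" "0 \<le> e * p y"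
        using assms(2,3) \<open>0 < e\<close> by (simp_all add: cINF_lower)
      then show "(INF y\<in>S. g y) \<le> g y + e * p y" by linarith
    qed
    with a show "a < (INF y\<in>S. g y + e * p y)" by linarith
  qed
next
  fix a
  assume "(INF y\<in>S. g y) < a"
  then obtain y where y: "y \<in> S" "g y < a"
    using assms(1,2) by (auto simp: cInf_less_iff)
  have "((\<lambda>e. g y + e * p y) \<longlongrightarrow> g y) (at_right 0)"
    by (auto intro!: tendsto_eq_intros)
  then have "\<forall>\<^sub>F e in at_right 0. g y + e * p y < a"
    using y(2) by (rule order_tendstoD)
  moreover have "\<forall>\<^sub>F e in at_right 0. (INF y\<in>S. g y + e * p y) \<le> g y + e * p y"
  proof (rule eventually_mono[OF eventually_at_right_less])
    fix e :: real
    assume "0 < e"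
    obtain m where m: "\<And>x. x \<in> S \<Longrightarrow> m \<le> g x"
      using assms(2) by (auto simp: bdd_below_def)
    have "m \<le> g x + e * p x" if "x \<in> S" for x
      using m[OF that] mult_nonneg_nonneg[OF _ assms(3)[OF that], of e] \<open>0 < e\<close> by linarith
    then have "bdd_below ((\<lambda>y. g y + e * p y) ` S)"
      by (rule bdd_belowI2)
    then show "(INF y\<in>S. g y + e * p y) \<le> g y + e * p y"
      using y(1) by (rule cINF_lower)
  qed
  ultimately show "\<forall>\<^sub>F e in at_right 0. (INF y\<in>S. g y + e * p y) < a"
    by eventually_elim (rule le_less_trans)
qed

theorem lemma3p2:
  fixes f :: "real^'n^'n \<Rightarrow> real" and z :: "real^'n^'n"
  assumes diff: "\<forall>y\<in>sym_mats. f differentiable (at y within sym_mats)"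
    and zS: "z \<in> sym_mats"
    and bdd: "bdd_below ((\<lambda>y. f y - y \<bullet> z) ` sym_mats)"
  shows "(\<forall>\<epsilon>>0. \<exists>y\<^sub>\<epsilon>\<in>sym_mats.
            (INF y\<in>sym_mats. f y + \<epsilon> * sqrt (1 + (norm y)\<^sup>2) - y \<bullet> z)
              = f y\<^sub>\<epsilon> + \<epsilon> * sqrt (1 + (norm y\<^sub>\<epsilon>)\<^sup>2) - y\<^sub>\<epsilon> \<bullet> z
            \<and> norm (z - sym_grad f y\<^sub>\<epsilon>) \<le> \<epsilon>)
     \<and> ((\<lambda>\<epsilon>. INF y\<in>sym_mats. f y + \<epsilon> * sqrt (1 + (norm y)\<^sup>2) - y \<bullet> z)
          \<longlongrightarrow> (INF y\<in>sym_mats. f y - y \<bullet> z)) (at_right 0)"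
proof -
  have nonempty: "sym_mats \<noteq> {}"
    using subspace_sym_mats subspace_0 by blast
  have "\<exists>y\<in>sym_mats. (INF x\<in>sym_mats. f x + \<epsilon> * sqrt (1 + (norm x)\<^sup>2) - x \<bullet> z)
              = f y + \<epsilon> * sqrt (1 + (norm y)\<^sup>2) - y \<bullet> z
            \<and> norm (z - sym_grad f y) \<le> \<epsilon>" if "\<epsilon> > 0" for \<epsilon>
  proof -
    let ?F = "\<lambda>y. f y + \<epsilon> * sqrt (1 + (norm y)\<^sup>2) - y \<bullet> z"
    obtain m where m: "\<And>y. y \<in> sym_mats \<Longrightarrow> m \<le> f y - y \<bullet> z"
      using bdd by (auto simp: bdd_below_def)
    have coercive: "m + \<epsilon> * norm y \<le> ?F y" if "y \<in> sym_mats" for y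
      using m[OF that] mult_left_mono[OF norm_le_sqrt_one_plus_norm_sq, of \<epsilon> y] \<open>\<epsilon> > 0\<close>
      by linarith
    have "continuous_on sym_mats f"
      using diff continuous_on_eq_continuous_within differentiable_imp_continuous_within by blast
    then have "continuous_on sym_mats ?F"
      by (intro continuous_intros)
    then obtain y where y: "y \<in> sym_mats" "\<And>x. x \<in> sym_mats \<Longrightarrow> ?F y \<le> ?F x"
      using continuous_attains_inf_coercive[OF closed_sym_mats nonempty _ \<open>\<epsilon> > 0\<close> coercive] by blast
    then have "(INF x\<in>sym_mats. ?F x) = ?F y"
      by (intro cInf_eq_minimum) auto
    moreover have "norm (z - sym_grad f y) \<le> \<epsilon>"
      using diff y zS \<open>\<epsilon> > 0\<close> by (intro norm_sub_sym_grad_at_penalized_min) auto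
    ultimately show ?thesis
      using y(1) by blast
  qed
  moreover have "((\<lambda>\<epsilon>. INF y\<in>sym_mats. f y - y \<bullet> z + \<epsilon> * sqrt (1 + (norm y)\<^sup>2))
      \<longlongrightarrow> (INF y\<in>sym_mats. f y - y \<bullet> z)) (at_right 0)"
    by (rule tendsto_INF_penalty[OF nonempty bdd]) simp
  ultimately show ?thesis
    by (simp add: diff_add_eq)
qed

end
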